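(* Let $A$ be a bounded distributive lattice with Priestley space $X$, and let $S\subseteq A$ be such that $\bigvee_A S$ exists. Then $\bigvee_A S$ is distributive if and only if $\mathfrak s(\bigvee_A S)={\sf cl}\bigcup_{s\in S}\mathfrak s(s)$.
   Context: A join $\bigvee_A S$ is distributive if $a\wedge\bigvee_A S=\bigvee_A\{a\wedge s:s\in S\}$ for all $a\in A$. The Priestley space $X$ of $A$ is the set of prime filters of $A$ ordered by inclusion, with topology generated by the basis $\{\mathfrak s(a)\setminus\mathfrak s(b):a,b\in A\}$, where $\mathfrak s(a)=\{x\in X:a\in x\}$; ${\sf cl}$ denotes topological closure in $X$. *)

theory Defs
  imports "HOL-Analysis.Analysis"
begin

definition is_join :: "'a::order set \<Rightarrow> 'a \<Rightarrow> bool" where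
  "is_join S j \<longleftrightarrow> (\<forall>s\<in>S. s \<le> j) \<and> (\<forall>u. (\<forall>s\<in>S. s \<le> u) \<longrightarrow> j \<le> u)"

definition distributive_join :: "'a::lattice set \<Rightarrow> 'a \<Rightarrow> bool" where
  "distributive_join S j \<longleftrightarrow> (\<forall>a. is_join ((\<lambda>s. inf a s) ` S) (inf a j))"

definition prime_filter :: "'a::bounded_lattice set \<Rightarrow> bool" where
  "prime_filter F \<longleftrightarrow> F \<noteq> {} \<and> F \<noteq> UNIV
     \<and> (\<forall>a b. a \<in> F \<and> a \<le> b \<longrightarrow> b \<in> F)
     \<and> (\<forall>a b. a \<in> F \<and> b \<in> F \<longrightarrow> inf a b \<in> F)
     \<and> (\<forall>a b. sup a b \<in> F \<longrightarrow> a \<in> F \<or> b \<in> F)"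

definition priestley_space :: "'a::bounded_lattice set set" where
  "priestley_space = {F. prime_filter F}"

definition sset :: "'a::bounded_lattice \<Rightarrow> 'a set set" where
  "sset a = {x \<in> priestley_space. a \<in> x}"

definition priestley_topology :: "'a::bounded_lattice set topology" where
  "priestley_topology = topology_generated_by {sset a - sset b | a b. True}"

end

theory Submission
  imports Defs
begin

text \<open>The sets \<open>sset a - sset b\<close> form a basis closed under finite intersections, so a
  prime filter lies in the closure of \<open>U = (\<Union>s\<in>S. sset s)\<close> iff each of its basic
  neighbourhoods \<open>sset a - sset b\<close> meets \<open>U\<close>. By the prime filter theorem,
  \<open>sset a - sset b\<close> misses \<open>sset c\<close> iff \<open>a \<sqinter> c \<le> b\<close>. As the closure of \<open>U\<close> always lies in the
  clopen set \<open>sset j\<close>, equality says that every \<open>b\<close> above all \<open>a \<sqinter> s\<close> lies above \<open>a \<sqinter> j\<close>,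
  which is distributivity of the join.\<close>

lemma generate_topology_on_basis_nhd:
  assumes Int_closed: "\<And>U V. U \<in> \<B> \<Longrightarrow> V \<in> \<B> \<Longrightarrow> U \<inter> V \<in> \<B>"
    and "generate_topology_on \<B> T" and "x \<in> T"
  shows "\<exists>V\<in>\<B>. x \<in> V \<and> V \<subseteq> T"
  using assms(2,3)
proof (induction arbitrary: x rule: generate_topology_on.induct)
  case (Int T1 T2)
  then obtain V1 V2 where "V1 \<in> \<B>" "x \<in> V1" "V1 \<subseteq> T1" "V2 \<in> \<B>" "x \<in> V2" "V2 \<subseteq> T2"
    by blast
  then show ?case using Int_closed[of V1 V2] by blast
next
  case (UN K)
  then obtain k where "k \<in> K" "x \<in> k" by blast
  with UN.IH[of k x] show ?case by blast
qed auto

lemma in_closure_of_topology_generated_by: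
  assumes "\<And>U V. U \<in> \<B> \<Longrightarrow> V \<in> \<B> \<Longrightarrow> U \<inter> V \<in> \<B>"
  shows "x \<in> topology_generated_by \<B> closure_of A \<longleftrightarrow>
           x \<in> \<Union>\<B> \<and> (\<forall>V\<in>\<B>. x \<in> V \<longrightarrow> V \<inter> A \<noteq> {})"
proof -
  have "(\<forall>T. x \<in> T \<and> openin (topology_generated_by \<B>) T \<longrightarrow> (\<exists>y. y \<in> A \<and> y \<in> T)) \<longleftrightarrow>
        (\<forall>V\<in>\<B>. x \<in> V \<longrightarrow> V \<inter> A \<noteq> {})" (is "?opens \<longleftrightarrow> ?basis")
  proof
    assume ?opens
    then show ?basis using topology_generated_by_Basis by blast
  next
    assume ?basis
    show ?opens
    proof (intro allI impI)
      fix T assume "x \<in> T \<and> openin (topology_generated_by \<B>) T"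
      then obtain V where "V \<in> \<B>" "x \<in> V" "V \<subseteq> T"
        using generate_topology_on_basis_nhd[OF assms] openin_topology_generated_by by blast
      then show "\<exists>y. y \<in> A \<and> y \<in> T" using \<open>?basis\<close> by blast
    qed
  qed
  then show ?thesis
    unfolding in_closure_of topology_generated_by_topspace by blast
qed

lemma prime_filter_upward:
  "prime_filter F \<Longrightarrow> a \<in> F \<Longrightarrow> a \<le> b \<Longrightarrow> b \<in> F"
  unfolding prime_filter_def by blast

lemma prime_filter_top:
  assumes "prime_filter F" shows "top \<in> F"
proof -
  obtain a where "a \<in> F" using assms unfolding prime_filter_def by auto
  then show ?thesis using prime_filter_upward[OF assms] by simp
qed

lemma prime_filter_bot:
  assumes "prime_filter F" shows "bot \<notin> F"
proof
  assume "bot \<in> F"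
  then have "F = UNIV" using prime_filter_upward[OF assms] by fastforce
  then show False using assms unfolding prime_filter_def by blast
qed

lemma prime_filter_inf_iff:
  assumes "prime_filter F" shows "inf a b \<in> F \<longleftrightarrow> a \<in> F \<and> b \<in> F"
  using assms prime_filter_upward[OF assms] unfolding prime_filter_def
  by (metis inf_le1 inf_le2)

lemma prime_filter_sup_iff:
  assumes "prime_filter F" shows "sup a b \<in> F \<longleftrightarrow> a \<in> F \<or> b \<in> F"
  using assms prime_filter_upward[OF assms] unfolding prime_filter_def
  by (metis sup_ge1 sup_ge2)

definition lattice_filter :: "'a::lattice set \<Rightarrow> bool" where
  "lattice_filter F \<longleftrightarrow>
     (\<forall>a b. a \<in> F \<and> a \<le> b \<longrightarrow> b \<in> F) \<and> (\<forall>a b. a \<in> F \<and> b \<in> F \<longrightarrow> inf a b \<in> F)"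

lemma lattice_filter_principal: "lattice_filter {z. c \<le> z}"
  unfolding lattice_filter_def by auto

lemma lattice_filter_Union_chain:
  assumes "\<forall>F\<in>C. lattice_filter F" and "\<forall>X\<in>C. \<forall>Y\<in>C. X \<subseteq> Y \<or> Y \<subseteq> X"
  shows "lattice_filter (\<Union>C)"
  unfolding lattice_filter_def
proof (intro conjI allI impI)
  fix a b assume "a \<in> \<Union>C \<and> a \<le> b"
  then show "b \<in> \<Union>C" using assms(1) unfolding lattice_filter_def by blast
next
  fix a b assume "a \<in> \<Union>C \<and> b \<in> \<Union>C"
  then obtain X Y where "X \<in> C" "Y \<in> C" "a \<in> X" "b \<in> Y" by blast
  moreover have "X \<subseteq> Y \<or> Y \<subseteq> X" using assms(2) \<open>X \<in> C\<close> \<open>Y \<in> C\<close> by blast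
  ultimately obtain Z where "Z \<in> C" "a \<in> Z" "b \<in> Z" by blast
  then show "inf a b \<in> \<Union>C" using assms(1) unfolding lattice_filter_def by blast
qed

lemma lattice_filter_adjoin:
  assumes "lattice_filter F"
  shows "lattice_filter {z. \<exists>f\<in>F. inf f p \<le> z}"
  unfolding lattice_filter_def
proof (intro conjI allI impI)
  fix a b assume "a \<in> {z. \<exists>f\<in>F. inf f p \<le> z} \<and> a \<le> b"
  then show "b \<in> {z. \<exists>f\<in>F. inf f p \<le> z}" using order_trans by blast
next
  fix a b assume "a \<in> {z. \<exists>f\<in>F. inf f p \<le> z} \<and> b \<in> {z. \<exists>f\<in>F. inf f p \<le> z}"
  then obtain f g where "f \<in> F" "g \<in> F" "inf f p \<le> a" "inf g p \<le> b" by blast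
  moreover have "inf (inf f g) p \<le> inf a b"
  proof -
    have "inf (inf f g) p = inf (inf f p) (inf g p)" by (simp add: inf_aci)
    also have "\<dots> \<le> inf a b" using \<open>inf f p \<le> a\<close> \<open>inf g p \<le> b\<close> by (rule inf_mono)
    finally show ?thesis .
  qed
  ultimately show "inf a b \<in> {z. \<exists>f\<in>F. inf f p \<le> z}"
    using assms unfolding lattice_filter_def by blast
qed

lemma maximal_lattice_filter_prime:
  fixes M :: "'a::{bounded_lattice, distrib_lattice} set"
  assumes M: "lattice_filter M" "c \<in> M" "b \<notin> M"
    and maximal: "\<And>F. lattice_filter F \<Longrightarrow> M \<subseteq> F \<Longrightarrow> b \<notin> F \<Longrightarrow> F = M"
  shows "prime_filter M"
proof -
  have below_b: "\<exists>f\<in>M. inf f p \<le> b" if "p \<notin> M" for p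
  proof (rule ccontr)
    assume "\<not> (\<exists>f\<in>M. inf f p \<le> b)"
    then have "b \<notin> {z. \<exists>f\<in>M. inf f p \<le> z}" by blast
    moreover have "M \<subseteq> {z. \<exists>f\<in>M. inf f p \<le> z}"
      using inf_le1 order_trans by blast
    ultimately have "{z. \<exists>f\<in>M. inf f p \<le> z} = M"
      using maximal[OF lattice_filter_adjoin[OF M(1)]] by blast
    moreover have "p \<in> {z. \<exists>f\<in>M. inf f p \<le> z}"
      using \<open>c \<in> M\<close> inf_le2 by blast
    ultimately show False using \<open>p \<notin> M\<close> by blast
  qed
  have "p \<in> M \<or> q \<in> M" if "sup p q \<in> M" for p q
  proof (rule ccontr)
    assume "\<not> (p \<in> M \<or> q \<in> M)"
    then obtain f g where fg: "f \<in> M" "g \<in> M" "inf f p \<le> b" "inf g q \<le> b"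
      using below_b by blast
    have "inf (inf f g) (sup p q) \<in> M"
      using fg that M(1) unfolding lattice_filter_def by blast
    moreover have "inf (inf f g) (sup p q) \<le> b"
    proof -
      have "inf (inf f g) (sup p q) = sup (inf (inf f g) p) (inf (inf f g) q)"
        by (rule inf_sup_distrib1)
      also have "\<dots> \<le> sup (inf f p) (inf g q)"
        by (intro sup_mono inf_mono) simp_all
      also have "\<dots> \<le> b"
        using fg by simp
      finally show ?thesis .
    qed
    ultimately show False using M unfolding lattice_filter_def by blast
  qed
  moreover have "M \<noteq> {}" "M \<noteq> UNIV" using M(2,3) by blast+
  ultimately show ?thesis using M(1) unfolding prime_filter_def lattice_filter_def by blast
qed

lemma prime_filter_separation:
  fixes c b :: "'a::{bounded_lattice, distrib_lattice}"
  assumes "\<not> c \<le> b"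
  obtains F where "prime_filter F" "c \<in> F" "b \<notin> F"
proof -
  define \<A> where "\<A> = {F. lattice_filter F \<and> c \<in> F \<and> b \<notin> F}"
  have "{z. c \<le> z} \<in> \<A>"
    using assms lattice_filter_principal unfolding \<A>_def by auto
  moreover have "\<Union>\<C> \<in> \<A>" if "\<C> \<noteq> {}" "subset.chain \<A> \<C>" for \<C>
  proof -
    have "\<C> \<subseteq> \<A>" "\<forall>X\<in>\<C>. \<forall>Y\<in>\<C>. X \<subseteq> Y \<or> Y \<subseteq> X"
      using that(2) unfolding subset_chain_def by blast+
    then have "lattice_filter (\<Union>\<C>)"
      by (intro lattice_filter_Union_chain) (auto simp: \<A>_def)
    then show ?thesis using \<open>\<C> \<subseteq> \<A>\<close> \<open>\<C> \<noteq> {}\<close> unfolding \<A>_def by blast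
  qed
  ultimately obtain M where "M \<in> \<A>" and "\<forall>X\<in>\<A>. M \<subseteq> X \<longrightarrow> X = M"
    using subset_Zorn_nonempty[of \<A>] by blast
  then have "prime_filter M" "c \<in> M" "b \<notin> M"
    using maximal_lattice_filter_prime[of M c b] unfolding \<A>_def by blast+
  then show thesis ..
qed

lemma sset_subset_priestley_space: "sset a \<subseteq> priestley_space"
  unfolding sset_def by blast

lemma sset_top: "sset top = priestley_space"
  unfolding sset_def priestley_space_def using prime_filter_top by blast

lemma sset_inf: "sset (inf a b) = sset a \<inter> sset b"
  unfolding sset_def priestley_space_def using prime_filter_inf_iff by blast

lemma sset_sup: "sset (sup a b) = sset a \<union> sset b"
  unfolding sset_def priestley_space_def using prime_filter_sup_iff by blast

lemma sset_mono: "a \<le> b \<Longrightarrow> sset a \<subseteq> sset b"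
  unfolding sset_def priestley_space_def using prime_filter_upward by blast

lemma sset_subset_iff:
  fixes a b :: "'a::{bounded_lattice, distrib_lattice}"
  shows "sset a \<subseteq> sset b \<longleftrightarrow> a \<le> b"
proof
  assume "sset a \<subseteq> sset b"
  show "a \<le> b"
  proof (rule ccontr)
    assume "\<not> a \<le> b"
    then obtain F where "prime_filter F" "a \<in> F" "b \<notin> F" by (rule prime_filter_separation)
    then show False
      using \<open>sset a \<subseteq> sset b\<close> unfolding sset_def priestley_space_def by blast
  qed
qed (rule sset_mono)

lemma sset_diff_disjoint_iff:
  fixes a b c :: "'a::{bounded_lattice, distrib_lattice}"
  shows "(sset a - sset b) \<inter> sset c = {} \<longleftrightarrow> inf a c \<le> b"
proof -
  have "(sset a - sset b) \<inter> sset c = {} \<longleftrightarrow> sset (inf a c) \<subseteq> sset b"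
    unfolding sset_inf by blast
  then show ?thesis unfolding sset_subset_iff .
qed

definition priestley_basis :: "'a::bounded_lattice set set set" where
  "priestley_basis = {sset a - sset b | a b. True}"

lemma priestley_topology_eq: "priestley_topology = topology_generated_by priestley_basis"
  unfolding priestley_topology_def priestley_basis_def ..

lemma priestley_basis_Int:
  assumes "U \<in> priestley_basis" "V \<in> priestley_basis"
  shows "U \<inter> V \<in> priestley_basis"
proof -
  obtain a b a' b' where "U = sset a - sset b" "V = sset a' - sset b'"
    using assms unfolding priestley_basis_def by auto
  then have "U \<inter> V = sset (inf a a') - sset (sup b b')" by (auto simp: sset_inf sset_sup)
  then show ?thesis unfolding priestley_basis_def by auto
qed

lemma priestley_basis_Union: "\<Union>priestley_basis = priestley_space"
proof -
  have "sset top - sset bot = priestley_space"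
    using prime_filter_bot unfolding sset_top by (auto simp: sset_def priestley_space_def)
  then show ?thesis
    using sset_subset_priestley_space unfolding priestley_basis_def by blast
qed

lemma topspace_priestley_topology: "topspace priestley_topology = priestley_space"
  unfolding priestley_topology_eq topology_generated_by_topspace by (rule priestley_basis_Union)

lemma openin_priestley_basis: "openin priestley_topology (sset a - sset b)"
  unfolding priestley_topology_eq by (rule topology_generated_by_Basis) (auto simp: priestley_basis_def)

lemma closedin_sset: "closedin priestley_topology (sset a)"
  using openin_priestley_basis[of top a]
  by (simp add: closedin_def topspace_priestley_topology sset_top sset_subset_priestley_space)

lemma in_closure_of_priestley_topology:
  "x \<in> priestley_topology closure_of A \<longleftrightarrow>
     x \<in> priestley_space \<and> (\<forall>a b. x \<in> sset a - sset b \<longrightarrow> (sset a - sset b) \<inter> A \<noteq> {})"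
proof -
  have "x \<in> priestley_topology closure_of A \<longleftrightarrow>
      x \<in> priestley_space \<and> (\<forall>V\<in>priestley_basis. x \<in> V \<longrightarrow> V \<inter> A \<noteq> {})"
    unfolding priestley_topology_eq priestley_basis_Union[symmetric]
    using priestley_basis_Int by (rule in_closure_of_topology_generated_by)
  also have "(\<forall>V\<in>priestley_basis. x \<in> V \<longrightarrow> V \<inter> A \<noteq> {}) \<longleftrightarrow>
             (\<forall>a b. x \<in> sset a - sset b \<longrightarrow> (sset a - sset b) \<inter> A \<noteq> {})"
    unfolding priestley_basis_def by auto
  finally show ?thesis .
qed

lemma distributive_join_iff:
  assumes "is_join S j"
  shows "distributive_join S j \<longleftrightarrow> (\<forall>a b. (\<forall>s\<in>S. inf a s \<le> b) \<longrightarrow> inf a j \<le> b)"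
proof -
  have "\<forall>s\<in>S. inf a s \<le> inf a j" for a
    using assms unfolding is_join_def by (simp add: le_infI2)
  then show ?thesis unfolding distributive_join_def is_join_def by auto
qed

theorem theorem5p16:
  fixes S :: "'a::{bounded_lattice, distrib_lattice} set" and j :: 'a
  assumes "is_join S j"
  shows "distributive_join S j \<longleftrightarrow>
           sset j = priestley_topology closure_of (\<Union>s\<in>S. sset s)"
proof -
  define U where "U = (\<Union>s\<in>S. sset s)"
  have "U \<subseteq> sset j"
    using assms sset_mono unfolding U_def is_join_def by blast
  then have "priestley_topology closure_of U \<subseteq> sset j"
    by (rule closure_of_minimal[OF _ closedin_sset])
  have "distributive_join S j \<longleftrightarrow> (\<forall>a b. (\<forall>s\<in>S. inf a s \<le> b) \<longrightarrow> inf a j \<le> b)"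
    by (rule distributive_join_iff[OF assms])
  also have "\<dots> \<longleftrightarrow>
      (\<forall>a b. (sset a - sset b) \<inter> U = {} \<longrightarrow> (sset a - sset b) \<inter> sset j = {})"
  proof -
    have "(sset a - sset b) \<inter> U = {} \<longleftrightarrow> (\<forall>s\<in>S. inf a s \<le> b)" for a b
      unfolding U_def Int_UN_distrib SUP_bot_conv sset_diff_disjoint_iff ..
    then show ?thesis by (simp only: sset_diff_disjoint_iff)
  qed
  also have "\<dots> \<longleftrightarrow>
      (\<forall>x\<in>sset j. \<forall>a b. x \<in> sset a - sset b \<longrightarrow> (sset a - sset b) \<inter> U \<noteq> {})"
    by blast
  also have "\<dots> \<longleftrightarrow> sset j \<subseteq> priestley_topology closure_of U"
    using sset_subset_priestley_space[of j] by (auto simp: in_closure_of_priestley_topology)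
  also have "\<dots> \<longleftrightarrow> sset j = priestley_topology closure_of U"
    using \<open>priestley_topology closure_of U \<subseteq> sset j\<close> by (intro iffI subset_antisym) auto
  finally show ?thesis unfolding U_def .
qed

end
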